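(* Let $\mathcal{G}=(\mathcal{V},\mathcal{E})$ be an undirected graph with $|\mathcal{N}_i|\ge (d+1)F+1$ for every $i\in\mathcal{V}$, and let $i\in\mathcal{B}$ be a benign agent updating by the resilient multi-dimensional consensus algorithm described in the context. Fix a time $k$, let $p=(k\bmod d)+1$, and let $\underline{m}_p(k)$ and $\overline{M}_p(k)$ be respectively the $(dF+1)$-th smallest and the $(dF+1)$-th largest of the values $e_p^{T}x$, $x\in\mathcal{X}^i(k)$ (counted with multiplicity). Then $y^i_p(k)\le\underline{m}_p(k)$ and $z^i_p(k)\ge\overline{M}_p(k)$.
   Context: $\mathcal{G}=(\mathcal{V},\mathcal{E})$ is undirected, $\mathcal{N}_i=\{j\in\mathcal{V}: e_{ij}\in\mathcal{E}\}$; $\mathcal{B}\subset\mathcal{V}$ is the set of benign agents; the other agents may send arbitrary values. $e_p$ is the $p$-th canonical basis vector of $\mathbb{R}^d$ and $v_p$ denotes the $p$-th entry of a vector $v$. For a finite multiset $\mathcal{A}\subset\mathbb{R}^d$ of cardinality $m$ (counted with multiplicity) and integer $0\le n\le m$, let $\mathcal{S}(\mathcal{A},n)$ be the collection of all sub-multisets of $\mathcal{A}$ of cardinality $m-n$, and $\varPsi(\mathcal{A},n)=\bigcap_{S\in\mathcal{S}(\mathcal{A},n)}\mathrm{Conv}(S)$. Algorithm: each benign agent $i$ has state $x^i(k)\in\mathbb{R}^d$. At each time $k$: (1) $i$ collects in the multiset $\mathcal{X}^i(k)$ the values received from all $j\in\mathcal{N}_i$; (2) with $p=(k \bmod d)+1$,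 it sorts the points of $\mathcal{X}^i(k)$ in ascending order of their $p$-th entries; (3) $\mathcal{Y}^i(k)$ is the multiset of the first $(d+1)F+1$ sorted points, and $y^i(k)$ is any point of $\varPsi(\mathcal{Y}^i(k),F)$; (4) $\mathcal{Z}^i(k)$ is the multiset of the last $(d+1)F+1$ sorted points, and $z^i(k)$ is any point of $\varPsi(\mathcal{Z}^i(k),F)$; (5) $x^i(k+1)=\frac{1}{3}\big(x^i(k)+y^i(k)+z^i(k)\big)$. *)

theory Defs
  imports "HOL-Analysis.Analysis" "HOL-Library.Multiset"
begin

definition nbrs :: "'v set \<Rightarrow> ('v \<times> 'v) set \<Rightarrow> 'v \<Rightarrow> 'v set" where
  "nbrs V E i = {j \<in> V. (i, j) \<in> E}"

definition Psi :: "'a::real_vector multiset \<Rightarrow> nat \<Rightarrow> 'a set" where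
  "Psi A n = (\<Inter>S \<in> {S. S \<subseteq># A \<and> size S = size A - n}. convex hull (set_mset S))"

definition kth_smallest :: "'a::linorder multiset \<Rightarrow> nat \<Rightarrow> 'a" where
  "kth_smallest M j = sorted_list_of_multiset M ! (j - 1)"

definition kth_largest :: "'a::linorder multiset \<Rightarrow> nat \<Rightarrow> 'a" where
  "kth_largest M j = rev (sorted_list_of_multiset M) ! (j - 1)"

end

theory Submission
  imports Defs
begin

text \<open>The first \<open>dF+1\<close> of the first \<open>(d+1)F+1\<close> sorted points form a sub-multiset
  of size \<open>(d+1)F+1-F\<close>, so \<open>\<Psi>\<close> lies in its convex hull; that hull
  lies in the half-space bounded by the largest sorting key it contains, which is the
  \<open>(dF+1)\<close>-th smallest key overall.\<close>

lemma mset_take_mono: "a \<le> b \<Longrightarrow> mset (take a xs) \<subseteq># mset (take b xs)"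
proof -
  assume "a \<le> b"
  then have "take b xs = take a xs @ take (b - a) (drop a xs)"
    by (metis le_add_diff_inverse take_add)
  then show ?thesis by (metis mset_append mset_subset_eq_add_left)
qed

lemma mset_drop_antimono: "a \<le> b \<Longrightarrow> mset (drop b xs) \<subseteq># mset (drop a xs)"
proof -
  assume "a \<le> b"
  then have "drop a xs = take (b - a) (drop a xs) @ drop b xs"
    by (metis append_take_drop_id drop_drop le_add_diff_inverse2)
  then show ?thesis by (metis mset_append mset_subset_eq_add_right)
qed

lemma Psi_subset_convex_hull:
  assumes "S \<subseteq># A" and "size S = size A - n"
  shows "Psi A n \<subseteq> convex hull set_mset S"
  using assms unfolding Psi_def by blast

lemma convex_hull_inner_le:
  fixes a :: "'a::real_inner"
  assumes "\<And>x. x \<in> S \<Longrightarrow> a \<bullet> x \<le> b" and "y \<in> convex hull S"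
  shows "a \<bullet> y \<le> b"
proof -
  have "convex hull S \<subseteq> {x. a \<bullet> x \<le> b}"
    using assms(1) by (intro hull_minimal convex_halfspace_le) auto
  then show ?thesis using assms(2) by blast
qed

lemma convex_hull_inner_ge:
  fixes a :: "'a::real_inner"
  assumes "\<And>x. x \<in> S \<Longrightarrow> a \<bullet> x \<ge> b" and "y \<in> convex hull S"
  shows "a \<bullet> y \<ge> b"
proof -
  have "convex hull S \<subseteq> {x. a \<bullet> x \<ge> b}"
    using assms(1) by (intro hull_minimal convex_halfspace_ge) auto
  then show ?thesis using assms(2) by blast
qed

lemma sorted_take_le_nth:
  assumes "sorted ys" and "m < length ys" and "x \<in> set (take (Suc m) ys)"
  shows "x \<le> ys ! m"
proof -
  obtain l where "l < Suc m" "l < length ys" "x = ys ! l"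
    using assms(3) by (auto simp: in_set_conv_nth)
  then show ?thesis using assms(1,2) by (simp add: sorted_nth_mono)
qed

lemma sorted_drop_ge_nth:
  assumes "sorted ys" and "m < length ys" and "x \<in> set (drop m ys)"
  shows "ys ! m \<le> x"
proof -
  obtain l where "l < length ys - m" "x = ys ! (m + l)"
    using assms(3) by (auto simp: in_set_conv_nth)
  then show ?thesis using assms(1) by (simp add: sorted_nth_mono)
qed

lemma kth_smallest_mset_sorted: "sorted ys \<Longrightarrow> kth_smallest (mset ys) j = ys ! (j - 1)"
  by (simp add: kth_smallest_def sorted_sort_id)

lemma kth_largest_mset_sorted:
  "sorted ys \<Longrightarrow> 1 \<le> j \<Longrightarrow> j \<le> length ys \<Longrightarrow> kth_largest (mset ys) j = ys ! (length ys - j)"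
  by (simp add: kth_largest_def sorted_sort_id rev_nth)

lemma Psi_prefix_inner_le:
  fixes xs :: "'a::real_inner list"
  assumes sorted: "sorted (map (inner a) xs)" and "F < n" and "n \<le> length xs"
    and y: "y \<in> Psi (mset (take n xs)) F"
  shows "a \<bullet> y \<le> a \<bullet> (xs ! (n - F - 1))"
proof -
  define m where "m = n - F - 1"
  have Suc_m: "Suc m = n - F" using \<open>F < n\<close> unfolding m_def by simp
  have sub: "mset (take (Suc m) xs) \<subseteq># mset (take n xs)"
    using Suc_m by (intro mset_take_mono) simp
  have size: "size (mset (take (Suc m) xs)) = size (mset (take n xs)) - F"
    using Suc_m \<open>n \<le> length xs\<close> by simp
  have "y \<in> convex hull set (take (Suc m) xs)"
    using Psi_subset_convex_hull[OF sub size] y by auto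
  moreover have "a \<bullet> x \<le> a \<bullet> (xs ! m)" if "x \<in> set (take (Suc m) xs)" for x
  proof -
    have "a \<bullet> x \<in> set (take (Suc m) (map (inner a) xs))"
      using that by (simp add: take_map)
    moreover have "m < length xs" using Suc_m \<open>n \<le> length xs\<close> by simp
    ultimately show ?thesis using sorted_take_le_nth[OF sorted] by simp
  qed
  ultimately show ?thesis unfolding m_def by (rule convex_hull_inner_le[rotated])
qed

lemma Psi_suffix_inner_ge:
  fixes xs :: "'a::real_inner list"
  assumes sorted: "sorted (map (inner a) xs)" and "F < n" and "n \<le> length xs"
    and z: "z \<in> Psi (mset (drop (length xs - n) xs)) F"
  shows "a \<bullet> z \<ge> a \<bullet> (xs ! (length xs - n + F))"
proof -
  define m where "m = length xs - n + F"
  have sub: "mset (drop m xs) \<subseteq># mset (drop (length xs - n) xs)"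
    unfolding m_def by (intro mset_drop_antimono) simp
  have size: "size (mset (drop m xs)) = size (mset (drop (length xs - n) xs)) - F"
    using \<open>n \<le> length xs\<close> unfolding m_def by simp
  have "z \<in> convex hull set (drop m xs)"
    using Psi_subset_convex_hull[OF sub size] z by auto
  moreover have "a \<bullet> x \<ge> a \<bullet> (xs ! m)" if "x \<in> set (drop m xs)" for x
  proof -
    have "a \<bullet> x \<in> set (drop m (map (inner a) xs))"
      using that by (simp add: drop_map)
    moreover have "m < length xs" using \<open>F < n\<close> \<open>n \<le> length xs\<close> unfolding m_def by simp
    ultimately show ?thesis using sorted_drop_ge_nth[OF sorted] by simp
  qed
  ultimately show ?thesis unfolding m_def by (rule convex_hull_inner_ge[rotated])
qed

theorem corollary2:
  fixes V :: "'v set" and E :: "('v \<times> 'v) set" and B :: "'v set"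
    and F :: nat and k :: nat and i :: 'v
    and idx :: "nat \<Rightarrow> 'd::finite"
    and recv :: "'v \<Rightarrow> real^'d"
    and xs :: "(real^'d) list"
    and y z :: "real^'d"
  assumes finV: "finite V"
    and undirected: "\<forall>a b. (a, b) \<in> E \<longrightarrow> (b, a) \<in> E"
    and edges: "E \<subseteq> V \<times> V"
    and deg: "\<forall>j \<in> V. card (nbrs V E j) \<ge> (CARD('d) + 1) * F + 1"
    and BV: "B \<subseteq> V" and iB: "i \<in> B"
    and idx: "bij_betw idx {1..CARD('d)} UNIV"
    and X_def: "mset xs = image_mset recv (mset_set (nbrs V E i))"
    and sorted: "sorted (map (\<lambda>x. x $ idx (k mod CARD('d) + 1)) xs)"
    and y: "y \<in> Psi (mset (take ((CARD('d) + 1) * F + 1) xs)) F"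
    and z: "z \<in> Psi (mset (drop (length xs - ((CARD('d) + 1) * F + 1)) xs)) F"
  shows "y $ idx (k mod CARD('d) + 1) \<le>
           kth_smallest (image_mset (\<lambda>x. x $ idx (k mod CARD('d) + 1)) (mset xs)) (CARD('d) * F + 1)
       \<and> z $ idx (k mod CARD('d) + 1) \<ge>
           kth_largest (image_mset (\<lambda>x. x $ idx (k mod CARD('d) + 1)) (mset xs)) (CARD('d) * F + 1)"
proof -
  define j where "j = idx (k mod CARD('d) + 1)"
  define n where "n = (CARD('d) + 1) * F + 1"
  have component: "(\<lambda>x. x $ j) = inner (axis j 1)"
    by (simp add: fun_eq_iff cart_eq_inner_axis inner_commute)
  have "length xs = card (nbrs V E i)"
    using arg_cong[OF X_def, of size] by simp
  then have len: "n \<le> length xs" using deg iB BV unfolding n_def by auto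
  have sorted_inner: "sorted (map (inner (axis j 1)) xs)"
    using sorted unfolding j_def [symmetric] component .
  have "y $ j \<le> xs ! (CARD('d) * F) $ j"
    using Psi_prefix_inner_le[OF sorted_inner _ len y[folded n_def]]
    by (simp add: n_def component [symmetric])
  moreover have "z $ j \<ge> xs ! (length xs - (CARD('d) * F + 1)) $ j"
    using Psi_suffix_inner_ge[OF sorted_inner _ len z[folded n_def]] len
    by (simp add: n_def component [symmetric])
  moreover have "kth_smallest (image_mset (\<lambda>x. x $ j) (mset xs)) (CARD('d) * F + 1)
      = xs ! (CARD('d) * F) $ j"
    using kth_smallest_mset_sorted[OF sorted[folded j_def]] len
    by (simp add: n_def flip: mset_map)
  moreover have "kth_largest (image_mset (\<lambda>x. x $ j) (mset xs)) (CARD('d) * F + 1)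
      = xs ! (length xs - (CARD('d) * F + 1)) $ j"
    using kth_largest_mset_sorted[OF sorted[folded j_def]] len
    by (simp add: n_def flip: mset_map)
  ultimately show ?thesis unfolding j_def by simp
qed

end
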